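(* Let $C,r>1$ and $n>(Cr)^8$. Suppose $H$ is sampled from a $Cr/n$-spread distribution on subgraphs of $K_{n,n}$. Then with probability at least $1-n^{-40}$ there do not exist disjoint sets $S,T\subset V(K_{n,n})$ with $|T|=20|S|<\sqrt n$ together with pairwise distinct unordered pairs $\{s^1_t,s^2_t\}$ ($t\in T$) of distinct vertices such that each $s^i_t\in S$ and $ts^i_t\in E(H)$ for $i=1,2$.
   Context: A random subgraph $H$ of $K_{n,n}$ is $q$-spread if $\mathbb{P}(S\subset H)\le q^{|S|}$ for every $S\subset E(K_{n,n})$. *)

theory Defs
  imports "HOL-Probability.Probability_Mass_Function"
begin

text \<open>K_{n,n}: vertices (False,i) (left side) and (True,j) (right side), i,j < n.
  The edge (i,j) joins left vertex i and right vertex j.\<close>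

definition KVert :: "nat \<Rightarrow> (bool \<times> nat) set" where
  "KVert n = UNIV \<times> {..<n}"

definition KEdges :: "nat \<Rightarrow> (nat \<times> nat) set" where
  "KEdges n = {..<n} \<times> {..<n}"

definition adj :: "(nat \<times> nat) set \<Rightarrow> bool \<times> nat \<Rightarrow> bool \<times> nat \<Rightarrow> bool" where
  "adj H u v \<longleftrightarrow> (\<exists>i j. (i, j) \<in> H \<and>
      ((u = (False, i) \<and> v = (True, j)) \<or> (u = (True, j) \<and> v = (False, i))))"

definition spread :: "nat \<Rightarrow> real \<Rightarrow> (nat \<times> nat) set pmf \<Rightarrow> bool" where
  "spread n q P \<longleftrightarrow> set_pmf P \<subseteq> Pow (KEdges n) \<and>
     (\<forall>S. S \<subseteq> KEdges n \<longrightarrow> measure_pmf.prob P {H. S \<subseteq> H} \<le> q ^ card S)"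

definition bad_config :: "nat \<Rightarrow> (nat \<times> nat) set \<Rightarrow> bool" where
  "bad_config n H \<longleftrightarrow> (\<exists>S T f.
     S \<subseteq> KVert n \<and> T \<subseteq> KVert n \<and> S \<inter> T = {} \<and> S \<noteq> {} \<and>
     card T = 20 * card S \<and> real (card T) < sqrt (real n) \<and>
     inj_on f T \<and>
     (\<forall>t\<in>T. \<exists>a b. f t = {a, b} \<and> a \<noteq> b \<and> a \<in> S \<and> b \<in> S \<and> adj H t a \<and> adj H t b))"

end

theory Submission
  imports Defs
begin

text \<open>A first moment (union bound) argument. A bad configuration with \<open>|S| = s\<close> injects the
  \<open>20s\<close> vertices of \<open>T\<close> into the \<open>s choose 2\<close> pairs of \<open>S\<close>, so \<open>s \<ge> 41\<close>, and it is
  witnessed by a triple \<open>(S, T, g)\<close> spanning \<open>40s\<close> distinct edges of \<open>K\<^sub>n\<^sub>,\<^sub>n\<close>. There are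
  at most \<open>(2n choose s) (2n choose 20s) (s choose 2)\<^sup>2\<^sup>0\<^sup>s\<close> witnesses, each contained in \<open>H\<close>
  with probability at most \<open>(Cr/n)\<^sup>4\<^sup>0\<^sup>s\<close> by spreadness. Since \<open>400 s\<^sup>2 < n\<close> and
  \<open>(Cr)\<^sup>8 < n\<close>, each term is at most \<open>n\<^sup>-\<^sup>4\<^sup>s \<le> n\<^sup>-\<^sup>1\<^sup>6\<^sup>4\<close>, and the at most \<open>2n\<close> values
  of \<open>s\<close> contribute at most \<open>n\<^sup>-\<^sup>4\<^sup>0\<close> in total.\<close>

lemma power_div_fact_le_exp:
  fixes x :: real
  assumes "x \<ge> 0"
  shows "x ^ k / fact k \<le> exp x"
proof -
  have summable: "summable (\<lambda>n. x ^ n /\<^sub>R fact n)"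
    and exp_eq: "exp x = (\<Sum>n. x ^ n /\<^sub>R fact n)"
    using exp_converges[of x] by (auto simp: sums_iff)
  have "(\<Sum>n\<in>{k}. x ^ n /\<^sub>R fact n) \<le> (\<Sum>n. x ^ n /\<^sub>R fact n)"
    by (rule sum_le_suminf[OF summable]) (use assms in auto)
  then show ?thesis
    by (simp add: exp_eq divide_inverse mult.commute)
qed

lemma power_self_le_fact: "real k ^ k \<le> 3 ^ k * fact k"
proof -
  have "real k ^ k / fact k \<le> exp 1 ^ k"
    using power_div_fact_le_exp[of "real k" k] by (simp add: exp_of_nat_mult[symmetric])
  also have "\<dots> \<le> 3 ^ k"
    using exp_le by (intro power_mono) auto
  finally show ?thesis
    by (simp add: divide_le_eq)
qed

lemma binomial_le_power_div: "real (m choose k) \<le> (3 * real m / real k) ^ k"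
proof (cases "k = 0")
  case False
  have "real (m choose k) * real k ^ k \<le> real (m choose k) * (3 ^ k * fact k)"
    by (intro mult_left_mono power_self_le_fact) simp
  also have "\<dots> = 3 ^ k * real ((m choose k) * fact k)"
    by simp
  also have "\<dots> \<le> 3 ^ k * real m ^ k"
    using of_nat_mono[OF binomial_fact_pow[of m k]] by (intro mult_left_mono) simp_all
  finally show ?thesis
    using False by (simp add: power_divide power_mult_distrib pos_le_divide_eq)
qed simp

lemma witness_weight_base_le:
  fixes x s c :: real
  assumes "x > 0" "s > 0" "(20 * s) ^ 2 \<le> x" "c ^ 8 \<le> x"
  shows "2 * x * (3 * x / (10 * s)) ^ 20 * s ^ 40 * (c / x) ^ 40 \<le> 1 / x ^ 4"
proof -
  have "2 * x * (3 * x / (10 * s)) ^ 20 * s ^ 40 * (c / x) ^ 40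
      = 2 * (3 / 200) ^ 20 * (((20 * s) ^ 2) ^ 10 * (c ^ 8) ^ 5) / x ^ 19"
    using assms by (simp add: field_simps flip: power_Suc)
  also have "\<dots> \<le> 2 * (3 / 200) ^ 20 * (x ^ 10 * x ^ 5) / x ^ 19"
    using assms by (intro divide_right_mono mult_left_mono mult_mono power_mono) auto
  also have "\<dots> = 2 * (3 / 200) ^ 20 / x ^ 4"
    using assms by (simp add: field_simps)
  also have "\<dots> \<le> 1 / x ^ 4"
    using assms power_decreasing[of 1 20 "3 / 200 :: real"] by (intro divide_right_mono) auto
  finally show ?thesis .
qed

lemma witness_term_le:
  fixes c :: real
  assumes "c > 0" "c ^ 8 < real n" "41 \<le> s" "real (20 * s) < sqrt (real n)"
  shows "real (2 * n choose s) * real (2 * n choose (20 * s)) * real s ^ (40 * s)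
           * (c / real n) ^ (40 * s) \<le> (1 / real n) ^ 164"
proof -
  define x where "x = real n"
  have x: "x > 0"
    using assms(1,2) unfolding x_def by (metis zero_less_power order.strict_trans)
  have s: "real s > 0"
    using assms(3) by simp
  have "(20 * real s) ^ 2 \<le> x"
    using assms(4) power_strict_mono[of "real (20 * s)" "sqrt x" 2] x unfolding x_def by simp
  then have base: "2 * x * (3 * x / (10 * real s)) ^ 20 * real s ^ 40 * (c / x) ^ 40 \<le> 1 / x ^ 4"
    using witness_weight_base_le[OF x s] assms(2) unfolding x_def by simp
  have "2 * n choose s \<le> (2 * n) ^ s"
    by (rule order_trans[OF _ binomial_fact_pow]) simp
  then have choose_S: "real (2 * n choose s) \<le> (2 * x) ^ s"
    unfolding x_def by (metis of_nat_mono of_nat_numeral of_nat_mult of_nat_power)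
  have "real (2 * n choose (20 * s)) \<le> (3 * (2 * x) / (20 * real s)) ^ (20 * s)"
    using binomial_le_power_div[of "2 * n" "20 * s"] unfolding x_def by simp
  then have choose_T: "real (2 * n choose (20 * s)) \<le> ((3 * x / (10 * real s)) ^ 20) ^ s"
    by (simp add: power_mult)
  have "real (2 * n choose s) * real (2 * n choose (20 * s)) * real s ^ (40 * s) * (c / x) ^ (40 * s)
      \<le> (2 * x) ^ s * ((3 * x / (10 * real s)) ^ 20) ^ s * (real s ^ 40) ^ s * ((c / x) ^ 40) ^ s"
    using choose_S choose_T x assms(1) by (intro mult_mono) (auto simp: power_mult)
  also have "\<dots> = (2 * x * (3 * x / (10 * real s)) ^ 20 * real s ^ 40 * (c / x) ^ 40) ^ s"
    by (simp only: power_mult_distrib)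
  also have "\<dots> \<le> (1 / x ^ 4) ^ s"
    using base x s assms(1) by (intro power_mono) auto
  also have "\<dots> \<le> (1 / x ^ 4) ^ 41"
    using x assms(3) by (intro power_decreasing) (auto simp: x_def)
  also have "\<dots> = (1 / x) ^ 164"
    by (simp add: power_one_over flip: power_mult)
  finally show ?thesis
    unfolding x_def .
qed

type_synonym vertex = "bool \<times> nat"

definition edge_between :: "vertex \<Rightarrow> vertex \<Rightarrow> nat \<times> nat" where
  "edge_between u v = (if fst u then (snd v, snd u) else (snd u, snd v))"

lemma adj_imp_edge_between: "adj H t a \<Longrightarrow> edge_between t a \<in> H \<and> fst t \<noteq> fst a"
  unfolding adj_def edge_between_def by auto

lemma edge_between_eq_iff:
  assumes "fst t \<noteq> fst a" "fst t' \<noteq> fst a'"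
  shows "edge_between t a = edge_between t' a' \<longleftrightarrow> (t = t' \<and> a = a') \<or> (t = a' \<and> a = t')"
  using assms by (cases "fst t"; cases "fst t'") (auto simp: edge_between_def prod_eq_iff)

lemma finite_KVert: "finite (KVert n)"
  unfolding KVert_def by simp

lemma card_KVert: "card (KVert n) = 2 * n"
  unfolding KVert_def by (simp add: card_cartesian_product)

lemma edge_between_in_KEdges: "u \<in> KVert n \<Longrightarrow> v \<in> KVert n \<Longrightarrow> edge_between u v \<in> KEdges n"
  unfolding KVert_def KEdges_def edge_between_def by auto

lemma finite_card_KVert_subsets:
  "finite {S. S \<subseteq> KVert n \<and> card S = k} \<and> card {S. S \<subseteq> KVert n \<and> card S = k} = 2 * n choose k"
  using n_subsets[OF finite_KVert, of n k] finite_KVert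
  by (auto simp: card_KVert intro: finite_subset[of _ "Pow (KVert n)"])

definition doubletons :: "'a set \<Rightarrow> 'a set set" where
  "doubletons S = {A. A \<subseteq> S \<and> card A = 2}"

lemma finite_doubletons: "finite S \<Longrightarrow> finite (doubletons S)"
  unfolding doubletons_def by (rule finite_subset[of _ "Pow S"]) auto

lemma card_doubletons: "finite S \<Longrightarrow> card (doubletons S) = card S choose 2"
  unfolding doubletons_def by (rule n_subsets)

lemma finite_card_Sigma_const:
  assumes "finite A" "card A = m" "\<And>a. a \<in> A \<Longrightarrow> finite (B a) \<and> card (B a) = k"
  shows "finite (Sigma A B) \<and> card (Sigma A B) = m * k"
  using assms by simp

text \<open>A witness \<open>(S, T, g)\<close> records a bad configuration with \<open>|S| = s\<close>, where \<open>g t\<close> is the pair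
  \<open>{s\<^sup>1\<^sub>t, s\<^sup>2\<^sub>t}\<close>; the side condition makes every \<open>t a\<close> with \<open>a \<in> g t\<close> an edge of \<open>K\<^sub>n\<^sub>,\<^sub>n\<close>.\<close>

definition witnesses :: "nat \<Rightarrow> nat \<Rightarrow> (vertex set \<times> vertex set \<times> (vertex \<Rightarrow> vertex set)) set" where
  "witnesses n s = {(S, T, g). S \<subseteq> KVert n \<and> card S = s \<and> T \<subseteq> KVert n \<and> card T = 20 * s
     \<and> S \<inter> T = {} \<and> g \<in> T \<rightarrow>\<^sub>E doubletons S \<and> (\<forall>t\<in>T. \<forall>a\<in>g t. fst t \<noteq> fst a)}"

definition witness_edges :: "vertex set \<times> vertex set \<times> (vertex \<Rightarrow> vertex set) \<Rightarrow> (nat \<times> nat) set" where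
  "witness_edges = (\<lambda>(S, T, g). (\<lambda>(t, a). edge_between t a) ` (SIGMA t:T. g t))"

lemma finite_card_witnesses:
  "finite (witnesses n s) \<and>
   card (witnesses n s) \<le> (2 * n choose s) * ((2 * n choose (20 * s)) * (s choose 2) ^ (20 * s))"
proof -
  let ?subsets = "\<lambda>k. {S. S \<subseteq> KVert n \<and> card S = k}"
  let ?W = "SIGMA S:?subsets s. SIGMA T:?subsets (20 * s). T \<rightarrow>\<^sub>E doubletons S"
  have finite_sub: "finite S" if "S \<in> ?subsets k" for S k
    using that finite_KVert finite_subset by blast
  have maps: "finite (T \<rightarrow>\<^sub>E doubletons S) \<and> card (T \<rightarrow>\<^sub>E doubletons S) = (s choose 2) ^ (20 * s)"
    if "S \<in> ?subsets s" "T \<in> ?subsets (20 * s)" for S T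
    using that finite_sub[OF that(1)] finite_sub[OF that(2)]
    by (simp add: finite_PiE finite_doubletons card_PiE card_doubletons)
  have inner: "finite (SIGMA T:?subsets (20 * s). T \<rightarrow>\<^sub>E doubletons S) \<and>
      card (SIGMA T:?subsets (20 * s). T \<rightarrow>\<^sub>E doubletons S)
        = (2 * n choose (20 * s)) * (s choose 2) ^ (20 * s)" if "S \<in> ?subsets s" for S
    by (rule finite_card_Sigma_const[OF _ _ maps[OF that]]) (simp_all add: finite_card_KVert_subsets)
  have "finite ?W \<and> card ?W = (2 * n choose s) * ((2 * n choose (20 * s)) * (s choose 2) ^ (20 * s))"
    by (rule finite_card_Sigma_const[OF _ _ inner]) (simp_all add: finite_card_KVert_subsets)
  moreover have "witnesses n s \<subseteq> ?W"
    unfolding witnesses_def by clarsimp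
  ultimately show ?thesis
    using card_mono[of ?W "witnesses n s"] finite_subset[of "witnesses n s" ?W] by simp
qed

lemma witness_pairs:
  assumes "(S, T, g) \<in> witnesses n s" "t \<in> T"
  shows "g t \<subseteq> S" "card (g t) = 2"
  using assms PiE_mem[of g T "\<lambda>_. doubletons S" t] unfolding witnesses_def doubletons_def by auto

lemma witness_edges_subset_KEdges:
  assumes "d \<in> witnesses n s"
  shows "witness_edges d \<subseteq> KEdges n"
proof
  fix e
  assume "e \<in> witness_edges d"
  then obtain S T g t a where d: "d = (S, T, g)" and "t \<in> T" "a \<in> g t" "e = edge_between t a"
    unfolding witness_edges_def by (cases d) auto
  moreover have "S \<subseteq> KVert n" "T \<subseteq> KVert n"
    using assms unfolding d witnesses_def by auto
  moreover have "a \<in> S"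
    using witness_pairs(1)[OF assms[unfolded d] \<open>t \<in> T\<close>] \<open>a \<in> g t\<close> by blast
  ultimately show "e \<in> KEdges n"
    by (blast intro: edge_between_in_KEdges)
qed

lemma card_witness_edges:
  assumes "d \<in> witnesses n s"
  shows "card (witness_edges d) = 40 * s"
proof -
  obtain S T g where d: "d = (S, T, g)"
    by (cases d) auto
  have T: "T \<subseteq> KVert n" "card T = 20 * s" and disjoint: "S \<inter> T = {}"
    and sides: "\<And>t a. t \<in> T \<Longrightarrow> a \<in> g t \<Longrightarrow> fst t \<noteq> fst a"
    using assms unfolding d witnesses_def by auto
  note g = witness_pairs[OF assms[unfolded d]]
  have "finite T"
    using T finite_KVert finite_subset by blast
  moreover have "finite (g t)" if "t \<in> T" for t
    using g(2)[OF that] by (metis card.infinite zero_neq_numeral)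
  ultimately have "card (SIGMA t:T. g t) = 40 * s"
    using g(2) T by simp
  moreover have "inj_on (\<lambda>(t, a). edge_between t a) (SIGMA t:T. g t)"
  proof (rule inj_onI)
    fix p p'
    assume "p \<in> (SIGMA t:T. g t)" "p' \<in> (SIGMA t:T. g t)"
      and eq: "(\<lambda>(t, a). edge_between t a) p = (\<lambda>(t, a). edge_between t a) p'"
    then obtain t a t' a' where p: "p = (t, a)" "t \<in> T" "a \<in> g t"
      and p': "p' = (t', a')" "t' \<in> T" "a' \<in> g t'"
      by blast
    have "t \<noteq> a'"
      using disjoint g(1)[OF p'(2)] p(2) p'(3) by blast
    then show "p = p'"
      using eq p p' by (simp add: edge_between_eq_iff sides[OF p(2,3)] sides[OF p'(2,3)])
  qed
  ultimately show ?thesis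
    unfolding d witness_edges_def by (simp add: card_image)
qed

definition witness_sizes :: "nat \<Rightarrow> nat set" where
  "witness_sizes n = {s. 41 \<le> s \<and> s \<le> 2 * n \<and> real (20 * s) < sqrt (real n)}"

lemma finite_card_witness_sizes: "finite (witness_sizes n) \<and> card (witness_sizes n) \<le> 2 * n"
proof -
  have sizes: "witness_sizes n \<subseteq> {1..2 * n}"
    unfolding witness_sizes_def by auto
  show ?thesis
    using finite_subset[OF sizes] card_mono[OF finite_atLeastAtMost sizes] by simp
qed

lemma forty_one_le_if_le_choose_two:
  fixes s :: nat
  assumes "0 < s" "20 * s \<le> s choose 2"
  shows "41 \<le> s"
proof -
  have "s * 40 \<le> s * (s - 1)"
    using assms(2) unfolding choose_two by linarith
  then show ?thesis
    using assms(1) by simp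
qed

lemma bad_config_imp_witness:
  assumes "bad_config n H"
  shows "\<exists>s\<in>witness_sizes n. \<exists>d\<in>witnesses n s. witness_edges d \<subseteq> H"
proof -
  obtain S T f where S: "S \<subseteq> KVert n" "S \<noteq> {}" and T: "T \<subseteq> KVert n" and disjoint: "S \<inter> T = {}"
    and card_T: "card T = 20 * card S" and sqrt_n: "real (card T) < sqrt (real n)"
    and inj: "inj_on f T"
    and pairs: "\<forall>t\<in>T. \<exists>a b. f t = {a, b} \<and> a \<noteq> b \<and> a \<in> S \<and> b \<in> S \<and> adj H t a \<and> adj H t b"
    using assms unfolding bad_config_def by blast
  have finite_S: "finite S"
    using S finite_KVert finite_subset by blast
  obtain a b where ab: "\<And>t. t \<in> T \<Longrightarrow> f t = {a t, b t} \<and> a t \<noteq> b t \<and> a t \<in> S \<and> b t \<in> S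
      \<and> adj H t (a t) \<and> adj H t (b t)"
    using pairs by metis
  have f_doubletons: "f ` T \<subseteq> doubletons S"
    using ab unfolding doubletons_def by auto
  have f_adj: "adj H t x" if "t \<in> T" "x \<in> f t" for t x
    using ab[OF that(1)] that(2) by auto
  have f_sides: "fst t \<noteq> fst x" if "t \<in> T" "x \<in> f t" for t x
    using adj_imp_edge_between[OF f_adj[OF that]] by simp
  have "20 * card S \<le> card S choose 2"
    using card_mono[OF finite_doubletons[OF finite_S] f_doubletons]
    by (simp add: card_image[OF inj] card_T card_doubletons[OF finite_S])
  then have "41 \<le> card S"
    using S finite_S by (intro forty_one_le_if_le_choose_two) auto
  moreover have "card S \<le> 2 * n"
    using card_mono[OF finite_KVert S(1)] by (simp add: card_KVert)
  ultimately have "card S \<in> witness_sizes n"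
    using sqrt_n card_T unfolding witness_sizes_def by simp
  moreover have "restrict f T \<in> T \<rightarrow>\<^sub>E doubletons S"
    using f_doubletons by (auto simp: restrict_PiE_iff)
  then have "(S, T, restrict f T) \<in> witnesses n (card S)"
    using S T disjoint card_T f_sides unfolding witnesses_def by simp
  moreover have "witness_edges (S, T, restrict f T) \<subseteq> H"
    using f_adj adj_imp_edge_between unfolding witness_edges_def by auto
  ultimately show ?thesis
    by blast
qed

lemma spread_prob_UN_le:
  assumes "spread n q P" "finite D"
    and "\<And>d. d \<in> D \<Longrightarrow> E d \<subseteq> KEdges n" "\<And>d. d \<in> D \<Longrightarrow> card (E d) = m"
  shows "measure_pmf.prob P (\<Union>d\<in>D. {H. E d \<subseteq> H}) \<le> real (card D) * q ^ m"
proof -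
  have "measure_pmf.prob P (\<Union>d\<in>D. {H. E d \<subseteq> H}) \<le> (\<Sum>d\<in>D. measure_pmf.prob P {H. E d \<subseteq> H})"
    by (rule measure_pmf.finite_measure_subadditive_finite[OF assms(2)]) simp
  also have "\<dots> \<le> (\<Sum>d\<in>D. q ^ m)"
    using assms(1,3,4) unfolding spread_def by (intro sum_mono) metis
  finally show ?thesis
    by simp
qed

lemma prob_witnesses_le:
  fixes c :: real
  assumes "c > 0" "c ^ 8 < real n" "spread n (c / real n) P" "s \<in> witness_sizes n"
  shows "measure_pmf.prob P (\<Union>d\<in>witnesses n s. {H. witness_edges d \<subseteq> H}) \<le> (1 / real n) ^ 164"
proof -
  have s: "41 \<le> s" "real (20 * s) < sqrt (real n)"
    using assms(4) unfolding witness_sizes_def by auto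
  have "s choose 2 \<le> s ^ 2"
    by (rule binomial_le_pow) (use s in auto)
  then have "(s choose 2) ^ (20 * s) \<le> s ^ (40 * s)"
    using power_mono[of "s choose 2" "s ^ 2" "20 * s"] by (simp flip: power_mult)
  then have "(2 * n choose s) * ((2 * n choose (20 * s)) * (s choose 2) ^ (20 * s))
      \<le> (2 * n choose s) * ((2 * n choose (20 * s)) * s ^ (40 * s))"
    by (intro mult_le_mono2)
  then have "card (witnesses n s) \<le> (2 * n choose s) * ((2 * n choose (20 * s)) * s ^ (40 * s))"
    using finite_card_witnesses[of n s] by linarith
  then have "real (card (witnesses n s))
      \<le> real ((2 * n choose s) * ((2 * n choose (20 * s)) * s ^ (40 * s)))"
    by (rule of_nat_mono)
  then have card_le: "real (card (witnesses n s))
      \<le> real (2 * n choose s) * real (2 * n choose (20 * s)) * real s ^ (40 * s)"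
    by (simp add: mult.assoc)
  have "measure_pmf.prob P (\<Union>d\<in>witnesses n s. {H. witness_edges d \<subseteq> H})
      \<le> real (card (witnesses n s)) * (c / real n) ^ (40 * s)"
    by (rule spread_prob_UN_le[OF assms(3)])
      (simp_all add: finite_card_witnesses witness_edges_subset_KEdges card_witness_edges)
  also have "\<dots> \<le> real (2 * n choose s) * real (2 * n choose (20 * s)) * real s ^ (40 * s)
      * (c / real n) ^ (40 * s)"
    using card_le assms(1) by (intro mult_right_mono) auto
  also have "\<dots> \<le> (1 / real n) ^ 164"
    by (rule witness_term_le[OF assms(1,2) s])
  finally show ?thesis .
qed

lemma two_mul_one_over_power_le:
  fixes x :: real
  assumes "x \<ge> 2"
  shows "2 * x * (1 / x) ^ 164 \<le> (1 / x) ^ 40"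
proof -
  have "2 \<le> x ^ 123"
    using assms order_trans[OF assms self_le_power[of x 123]] by simp
  then have "2 * (x * x ^ 40) \<le> x ^ 123 * (x * x ^ 40)"
    using assms by (intro mult_right_mono) auto
  also have "\<dots> = x ^ 164"
    by (simp flip: power_add power_Suc)
  finally have "2 * x * x ^ 40 \<le> x ^ 164"
    by (simp add: mult.assoc)
  then show ?thesis
    using assms by (simp add: power_one_over field_simps)
qed

lemma prob_bad_config_le:
  fixes c :: real
  assumes "c > 1" "c ^ 8 < real n" "spread n (c / real n) P"
  shows "measure_pmf.prob P {H. bad_config n H} \<le> (1 / real n) ^ 40"
proof -
  let ?witnessed = "\<lambda>s. \<Union>d\<in>witnesses n s. {H. witness_edges d \<subseteq> H}"
  have "1 < c ^ 8"
    using assms(1) by simp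
  then have "1 < n"
    using assms(2) by linarith
  then have n: "real n \<ge> 2"
    by simp
  have "{H. bad_config n H} \<subseteq> (\<Union>s\<in>witness_sizes n. ?witnessed s)"
  proof
    fix H
    assume "H \<in> {H. bad_config n H}"
    then obtain s d where "s \<in> witness_sizes n" "d \<in> witnesses n s" "witness_edges d \<subseteq> H"
      using bad_config_imp_witness by (metis mem_Collect_eq)
    then show "H \<in> (\<Union>s\<in>witness_sizes n. ?witnessed s)"
      by blast
  qed
  then have "measure_pmf.prob P {H. bad_config n H} \<le> measure_pmf.prob P (\<Union>s\<in>witness_sizes n. ?witnessed s)"
    by (rule measure_pmf.finite_measure_mono) simp
  also have "\<dots> \<le> (\<Sum>s\<in>witness_sizes n. measure_pmf.prob P (?witnessed s))"
    using finite_card_witness_sizes by (intro measure_pmf.finite_measure_subadditive_finite) auto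
  also have "\<dots> \<le> (\<Sum>s\<in>witness_sizes n. (1 / real n) ^ 164)"
    using assms by (intro sum_mono prob_witnesses_le) auto
  also have "\<dots> \<le> 2 * real n * (1 / real n) ^ 164"
    using finite_card_witness_sizes[of n] by (simp add: mult_right_mono)
  also have "\<dots> \<le> (1 / real n) ^ 40"
    by (rule two_mul_one_over_power_le[OF n])
  finally show ?thesis .
qed

theorem lemma2p7:
  fixes C r :: real and n :: nat and P :: "(nat \<times> nat) set pmf"
  assumes "C > 1" and "r > 1" and "real n > (C * r) ^ 8"
    and "spread n (C * r / real n) P"
  shows "measure_pmf.prob P {H. \<not> bad_config n H} \<ge> 1 - 1 / real n ^ 40"
proof -
  have "C * r > 1"
    using assms(1,2) less_1_mult by blast
  then have "measure_pmf.prob P {H. bad_config n H} \<le> (1 / real n) ^ 40"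
    using assms(3,4) by (intro prob_bad_config_le) auto
  moreover have "measure_pmf.prob P {H. \<not> bad_config n H} = 1 - measure_pmf.prob P {H. bad_config n H}"
    using measure_pmf.prob_compl[of "{H. bad_config n H}" P] by (simp add: Compl_eq_Diff_UNIV[symmetric] Collect_neg_eq)
  ultimately show ?thesis
    by (simp add: power_one_over)
qed

end
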